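(* Let $n\ge 1$ and let $F$ be a permutation of $\mathbb{F}_{2^n}$ such that $F(x)=\mathrm{Inv}(x)$ for all $x\in\mathbb{F}_{2^n}\setminus P$, for some nonempty subset $P\subseteq\mathbb{F}_{2^n}$ with $0\in P$. If $c\in\mathbb{F}_{2^n}$ and $c\neq1$, then ${}_c\Delta_F\le \#P+2$.
   Context: $\mathrm{Inv}$ is the multiplicative inverse function on $\mathbb{F}_{2^n}$: $\mathrm{Inv}(x)=x^{2^n-2}$, so $\mathrm{Inv}(x)=x^{-1}$ for $x\neq0$ and $\mathrm{Inv}(0)=0$. For $F:\mathbb{F}_{2^n}\to\mathbb{F}_{2^n}$ and $c\in\mathbb{F}_{2^n}$, ${}_cD_aF(x)=F(x+a)+cF(x)$. For $a,b\in\mathbb{F}_{2^n}$, ${}_c\Delta_F(a,b)$ is the number of $x\in\mathbb{F}_{2^n}$ with ${}_cD_aF(x)=b$, and ${}_c\Delta_F=\max\{{}_c\Delta_F(a,b): a,b\in\mathbb{F}_{2^n},\ a\neq 0 \text{ if } c=1\}$. *)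

theory Defs
  imports "HOL-Library.Cardinality"
begin

definition Inv :: "'a::{field,finite} \<Rightarrow> 'a" where
  "Inv x = x ^ (CARD('a) - 2)"

definition cDer :: "'a::field \<Rightarrow> 'a \<Rightarrow> ('a \<Rightarrow> 'a) \<Rightarrow> 'a \<Rightarrow> 'a" where
  "cDer c a F x = F (x + a) + c * F x"

definition cDelta_ab :: "'a::{field,finite} \<Rightarrow> ('a \<Rightarrow> 'a) \<Rightarrow> 'a \<Rightarrow> 'a \<Rightarrow> nat" where
  "cDelta_ab c F a b = card {x. cDer c a F x = b}"

definition cDelta :: "'a::{field,finite} \<Rightarrow> ('a \<Rightarrow> 'a) \<Rightarrow> nat" where
  "cDelta c F = Max {cDelta_ab c F a b | a b. a \<noteq> 0 \<or> c \<noteq> 1}"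

end

theory Submission
  imports Defs "HOL-Number_Theory.Residues" "HOL-Computational_Algebra.Polynomial"
begin

text \<open>Fix \<open>a\<close>, \<open>b\<close> and count the solutions \<open>x\<close> of \<open>F(x + a) + c F(x) = b\<close>.
  For \<open>a = 0\<close> the equation reads \<open>(1 + c) F(x) = b\<close>; as \<open>1 + c \<noteq> 0\<close> in characteristic 2
  and \<open>F\<close> is injective, it has at most one solution. For \<open>a \<noteq> 0\<close>, \<open>x\<close> and \<open>x + a\<close> are
  never both solutions: since \<open>x + a + a = x\<close>, subtracting the two equations would give
  \<open>(1 - c)(F(x) - F(x + a)) = 0\<close>. So sending a solution to whichever of \<open>x\<close>, \<open>x + a\<close> lies
  in \<open>P\<close> is injective on the solutions for which \<open>{x, x + a}\<close> meets \<open>P\<close>, and there are at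
  most \<open>#P\<close> of them. Every other solution satisfies \<open>1/(x + a) + c/x = b\<close>, which clears
  to a nonzero polynomial equation of degree at most 2.\<close>

lemma CHAR_eq_2_if_CARD_eq_power_2:
  assumes "CARD('a) = 2 ^ n"
  shows "CHAR('a :: idom) = 2"
proof -
  have "finite (UNIV :: 'a set)"
    by (rule card_ge_0_finite) (simp add: assms)
  then have prime: "prime CHAR('a)"
    by (intro prime_CHAR_semidom finite_imp_CHAR_pos)
  have "CHAR('a) dvd 2 ^ n"
    using CHAR_dvd_CARD[where 'a='a] unfolding assms .
  with prime have "CHAR('a) dvd 2"
    by (rule prime_dvd_power)
  then show ?thesis
    by (rule primes_dvd_imp_eq[OF prime two_is_prime_nat])
qed

lemma power_CARD_minus_1_eq_1:
  fixes x :: "'a::{field,finite}"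
  assumes "x \<noteq> 0"
  shows "x ^ (CARD('a) - 1) = 1"
proof -
  have "\<Prod>(UNIV - {0::'a}) = (\<Prod>y\<in>UNIV - {0}. x * y)"
    by (rule prod.reindex_bij_witness[of _ "\<lambda>y. x * y" "\<lambda>y. y / x"]) (use assms in auto)
  also have "\<dots> = x ^ (CARD('a) - 1) * \<Prod>(UNIV - {0::'a})"
    by (simp add: prod.distrib card_Diff_singleton)
  finally show ?thesis
    by simp
qed

text \<open>The hypothesis \<open>x \<noteq> 0\<close> is needed: over the two-element field \<open>Inv 0 = 0 ^ 0 = 1\<close>.\<close>

lemma Inv_eq_inverse:
  fixes x :: "'a::{field,finite}"
  assumes "x \<noteq> 0"
  shows "Inv x = inverse x"
proof -
  have "CARD('a) \<ge> 2"
    using card_mono[of UNIV "{0::'a, 1}"] by simp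
  then have "x * Inv x = x ^ (CARD('a) - 1)"
    unfolding Inv_def by (metis Suc_diff_Suc Suc_1 Suc_le_lessD power_Suc)
  also have "\<dots> = 1"
    using power_CARD_minus_1_eq_1[OF assms] .
  finally show ?thesis
    using assms by (simp add: field_simps)
qed

lemma card_roots_quadratic_le_2:
  fixes c\<^sub>0 c\<^sub>1 c\<^sub>2 :: "'a::idom"
  assumes "c\<^sub>2 \<noteq> 0 \<or> c\<^sub>1 \<noteq> 0 \<or> c\<^sub>0 \<noteq> 0"
  shows "card {x. c\<^sub>2 * x\<^sup>2 + c\<^sub>1 * x + c\<^sub>0 = 0} \<le> 2"
proof -
  have "[:c\<^sub>0, c\<^sub>1, c\<^sub>2:] \<noteq> 0"
    using assms by auto
  then have "card {x. poly [:c\<^sub>0, c\<^sub>1, c\<^sub>2:] x = 0} \<le> degree [:c\<^sub>0, c\<^sub>1, c\<^sub>2:]"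
    by (rule card_poly_roots_bound)
  also have "\<dots> \<le> 2"
    by (simp add: degree_pCons_le)
  finally show ?thesis
    by (simp add: algebra_simps power2_eq_square)
qed

lemma card_inverse_shift_equation_le_2:
  fixes a b c :: "'a::{field,finite}"
  assumes "a \<noteq> 0"
  shows "card {x. x \<noteq> 0 \<and> x + a \<noteq> 0 \<and> inverse (x + a) + c * inverse x = b} \<le> 2"
proof -
  have nonzero: "b \<noteq> 0 \<or> a * b - 1 - c \<noteq> 0 \<or> - (c * a) \<noteq> 0"
    using assms by (cases "b = 0") (auto simp: algebra_simps)
  have "{x. x \<noteq> 0 \<and> x + a \<noteq> 0 \<and> inverse (x + a) + c * inverse x = b}
      \<subseteq> {x. b * x\<^sup>2 + (a * b - 1 - c) * x + - (c * a) = 0}"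
  proof
    fix x
    assume "x \<in> {x. x \<noteq> 0 \<and> x + a \<noteq> 0 \<and> inverse (x + a) + c * inverse x = b}"
    then have "x \<noteq> 0" "x + a \<noteq> 0" and b: "inverse (x + a) + c * inverse x = b"
      by auto
    have "b * x * (x + a) = (inverse (x + a) * (x + a)) * x + c * (inverse x * x) * (x + a)"
      unfolding b[symmetric] by (simp add: algebra_simps)
    also have "\<dots> = x + c * (x + a)"
      using \<open>x \<noteq> 0\<close> \<open>x + a \<noteq> 0\<close> by simp
    finally have "b * x * (x + a) = x + c * (x + a)" .
    then show "x \<in> {x. b * x\<^sup>2 + (a * b - 1 - c) * x + - (c * a) = 0}"
      by (simp add: algebra_simps power2_eq_square)
  qed
  then have "card {x. x \<noteq> 0 \<and> x + a \<noteq> 0 \<and> inverse (x + a) + c * inverse x = b}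
      \<le> card {x. b * x\<^sup>2 + (a * b - 1 - c) * x + - (c * a) = 0}"
    by (rule card_mono[OF finite])
  also have "\<dots> \<le> 2"
    using nonzero by (rule card_roots_quadratic_le_2)
  finally show ?thesis .
qed

lemma card_shift_free_near_le:
  fixes S P :: "'a::cancel_semigroup_add set"
  assumes "finite P" and "\<And>x. x \<in> S \<Longrightarrow> x + a \<notin> S"
  shows "card (S \<inter> {x. x \<in> P \<or> x + a \<in> P}) \<le> card P"
proof -
  define g where "g x = (if x \<in> P then x else x + a)" for x
  have "inj_on g S"
  proof (rule inj_onI)
    fix x y
    assume "x \<in> S" "y \<in> S" and "g x = g y"
    then show "x = y"
      using assms(2) unfolding g_def by (cases "x \<in> P"; cases "y \<in> P") auto
  qed
  then have "inj_on g (S \<inter> {x. x \<in> P \<or> x + a \<in> P})"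
    by (rule inj_on_subset) simp
  moreover have "g ` (S \<inter> {x. x \<in> P \<or> x + a \<in> P}) \<subseteq> P"
    unfolding g_def by auto
  ultimately show ?thesis
    using assms(1) by (rule card_inj_on_le)
qed

lemma cDelta_ab_zero_le_1:
  fixes F :: "'a::{field,finite} \<Rightarrow> 'a"
  assumes "inj F" and "1 + c \<noteq> 0"
  shows "cDelta_ab c F 0 b \<le> 1"
proof -
  have "{x. cDer c 0 F x = b} \<subseteq> {inv_into UNIV F (b / (1 + c))}"
  proof
    fix x
    assume "x \<in> {x. cDer c 0 F x = b}"
    then have "F x = b / (1 + c)"
      using assms(2) by (simp add: cDer_def field_simps)
    then show "x \<in> {inv_into UNIV F (b / (1 + c))}"
      using assms(1) by (metis inv_f_f singletonI)
  qed
  then have "card {x. cDer c 0 F x = b} \<le> card {inv_into UNIV F (b / (1 + c))}"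
    by (rule card_mono[OF finite])
  then show ?thesis
    unfolding cDelta_ab_def by simp
qed

lemma cDer_eq_imp_shift_neq:
  fixes F :: "'a::{field,finite} \<Rightarrow> 'a"
  assumes "CHAR('a) = 2" and "inj F" and "c \<noteq> 1" and "a \<noteq> 0"
    and "cDer c a F x = b"
  shows "cDer c a F (x + a) \<noteq> b"
proof
  assume "cDer c a F (x + a) = b"
  moreover have "x + a + a = x"
    using uminus_CHAR_2[OF assms(1), of a] by (metis add.assoc add.right_neutral ab_left_minus)
  ultimately have "F x + c * F (x + a) = F (x + a) + c * F x"
    using assms(5) by (simp add: cDer_def)
  then have "(1 - c) * (F x - F (x + a)) = 0"
    by (simp add: algebra_simps)
  then have "x = x + a"
    using assms(2,3) by (simp add: inj_eq)
  with assms(4) show False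
    by simp
qed

lemma cDelta_ab_le_card_plus_2:
  fixes F :: "'a::{field,finite} \<Rightarrow> 'a"
  assumes "CHAR('a) = 2" and "inj F" and "c \<noteq> 1" and "a \<noteq> 0"
    and "0 \<in> P" and "\<And>x. x \<notin> P \<Longrightarrow> F x = inverse x"
  shows "cDelta_ab c F a b \<le> card P + 2"
proof -
  define S where "S = {x. cDer c a F x = b}"
  define A where "A = {x. x \<in> P \<or> x + a \<in> P}"
  have "card (S \<inter> A) \<le> card P"
    unfolding S_def A_def
    by (rule card_shift_free_near_le) (use cDer_eq_imp_shift_neq[OF assms(1-4)] in auto)
  moreover have "S - A \<subseteq> {x. x \<noteq> 0 \<and> x + a \<noteq> 0 \<and> inverse (x + a) + c * inverse x = b}"
    using assms(5,6) unfolding S_def A_def cDer_def by auto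
  then have "card (S - A) \<le> 2"
    using card_inverse_shift_equation_le_2[OF assms(4)] by (meson card_mono finite le_trans)
  moreover have "card S \<le> card (S \<inter> A) + card (S - A)"
    by (metis Int_Diff_Un card_Un_le)
  ultimately show ?thesis
    unfolding cDelta_ab_def S_def by simp
qed

lemma cDelta_le:
  fixes F :: "'a::{field,finite} \<Rightarrow> 'a"
  assumes "\<And>a b. a \<noteq> 0 \<or> c \<noteq> 1 \<Longrightarrow> cDelta_ab c F a b \<le> k"
  shows "cDelta c F \<le> k"
proof -
  let ?M = "{cDelta_ab c F a b | a b. a \<noteq> 0 \<or> c \<noteq> 1}"
  have "?M \<subseteq> range (case_prod (cDelta_ab c F))"
    by auto
  then have "finite ?M"
    by (rule finite_subset) simp
  moreover have "cDelta_ab c F 1 0 \<in> ?M"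
    by auto
  ultimately show ?thesis
    unfolding cDelta_def using assms by (intro Max.boundedI) auto
qed

theorem mainTheorem3:
  fixes F :: "'a::{field,finite} \<Rightarrow> 'a" and P :: "'a set" and c :: 'a and n :: nat
  assumes "n \<ge> 1" and "CARD('a) = 2 ^ n"
    and "bij F"
    and "P \<noteq> {}" and "0 \<in> P"
    and "\<And>x. x \<notin> P \<Longrightarrow> F x = Inv x"
    and "c \<noteq> 1"
  shows "cDelta c F \<le> card P + 2"
proof (rule cDelta_le)
  fix a b
  have char: "CHAR('a) = 2"
    using assms(2) by (rule CHAR_eq_2_if_CARD_eq_power_2)
  have inj: "inj F"
    using assms(3) by (rule bij_is_inj)
  show "cDelta_ab c F a b \<le> card P + 2"
  proof (cases "a = 0")
    case True
    have "1 + c \<noteq> 0"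
      using assms(7) uminus_CHAR_2[OF char, of 1] by (metis add_eq_0_iff)
    with inj have "cDelta_ab c F 0 b \<le> 1"
      by (rule cDelta_ab_zero_le_1)
    with True show ?thesis
      by simp
  next
    case False
    have "F x = inverse x" if "x \<notin> P" for x
      using that assms(5,6) Inv_eq_inverse by metis
    with char inj assms(7) False assms(5) show ?thesis
      by (rule cDelta_ab_le_card_plus_2)
  qed
qed

end
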